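(* In the setting of $n=2^q$ identical fermions injected in the input state $(1+nc,\dots,n+nc)$ ($0\le c\le 2^k-1$) of the Sylvester interferometer $\frac{1}{\sqrt m}H(m)$ with $m=2^{k+q}$, the number of non-suppressed output states is exactly $(m/n)^n=2^{kn}$, out of $\binom{m+n-1}{n}$ possible $n$-particle output states.
   Context: For $m=2^p$, the Sylvester matrix $H(m)$ is defined recursively by $H(1)=[1]$ and $H(2^p)=\begin{bmatrix}H(2^{p-1})&H(2^{p-1})\\ H(2^{p-1})&-H(2^{p-1})\end{bmatrix}$, rows and columns indexed $1,\dots,m$. An $n$-particle output state on $m$ modes is a nondecreasing tuple $\vec t=(t_1\le\dots\le t_n)$ with $t_i\in\{1,\dots,m\}$; $\mu_k(\vec t)=|\{i:t_i=k\}|$. For input $\vec s$ and output $\vec t$, the scattering matrix is $S_{i,j}=U_{t_i,s_j}$ with $U=\frac{1}{\sqrt m}H(m)$, and the fermionic amplitude is $\det S/\sqrt{\prod_k\mu_k(\vec s)!\prod_k\mu_k(\vec t)!}$. An output state is suppressed if its amplitude is zero. *)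

theory Defs
  imports Main "Jordan_Normal_Form.Determinant"
begin

text \<open>Sylvester matrix H(2^p), rows/columns indexed 1..2^p, defined recursively by
  H(1) = [1], H(2^(p+1)) = [[H,H],[H,-H]].\<close>
fun sylv :: "nat \<Rightarrow> nat \<Rightarrow> nat \<Rightarrow> int" where
  "sylv 0 i j = 1"
| "sylv (Suc p) i j =
     (if i \<le> 2^p then (if j \<le> 2^p then sylv p i j else sylv p i (j - 2^p))
      else (if j \<le> 2^p then sylv p (i - 2^p) j else - sylv p (i - 2^p) (j - 2^p)))"

definition sylvU :: "nat \<Rightarrow> nat \<Rightarrow> nat \<Rightarrow> real" where
  "sylvU p i j = real_of_int (sylv p i j) / sqrt (2 ^ p)"

definition output_states :: "nat \<Rightarrow> nat \<Rightarrow> nat list set" where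
  "output_states m n = {t. length t = n \<and> sorted t \<and> set t \<subseteq> {1..m}}"

definition mu :: "nat list \<Rightarrow> nat \<Rightarrow> nat" where
  "mu t k = count_list t k"

text \<open>Scattering matrix S_{i,j} = U_{t_i, s_j} (0-based list/matrix indices).\<close>
definition scattering :: "nat \<Rightarrow> nat list \<Rightarrow> nat list \<Rightarrow> real mat" where
  "scattering p s t = mat (length t) (length s) (\<lambda>(i, j). sylvU p (t ! i) (s ! j))"

definition fermion_amplitude :: "nat \<Rightarrow> nat list \<Rightarrow> nat list \<Rightarrow> real" where
  "fermion_amplitude p s t =
     det (scattering p s t) /
     sqrt (real ((\<Prod>k\<in>{1..2^p}. fact (mu s k)) * (\<Prod>k\<in>{1..2^p}. fact (mu t k))))"

definition suppressed :: "nat \<Rightarrow> nat list \<Rightarrow> nat list \<Rightarrow> bool" where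
  "suppressed p s t \<longleftrightarrow> fermion_amplitude p s t = 0"

end

theory Submission
  imports Defs "HOL-Library.Multiset"
begin

text \<open>Write an output mode as \<open>t\<^sub>i = \<rho>\<^sub>i + 1 + n h\<^sub>i\<close> with \<open>\<rho>\<^sub>i < n = 2^q\<close>.
  Since \<open>H(2^(k+q))\<close> is the Kronecker product \<open>H(2^k) \<otimes> H(2^q)\<close> and the input modes
  fill one block of \<open>n\<close> consecutive modes, row \<open>i\<close> of the scattering matrix is
  \<open>\<plusminus>\<close> row \<open>\<rho>\<^sub>i\<close> of \<open>H(n)\<close>, scaled by \<open>1/\<surd>m\<close>. The rows of \<open>H(n)\<close> are orthogonal,
  so the determinant vanishes exactly when two residues \<open>\<rho>\<^sub>i\<close> coincide. A non-suppressed
  output is therefore the same as a set of \<open>n\<close> modes meeting every residue class mod \<open>n\<close>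
  exactly once; each class has \<open>m/n\<close> modes, giving \<open>(m/n)^n\<close> outputs. All outputs
  are the \<open>n\<close>-multisets on \<open>m\<close> modes.\<close>

lemma sylv_sign: "sylv p i j = 1 \<or> sylv p i j = -1"
  by (induction p arbitrary: i j) auto

lemma sylv_mult_self [simp]: "sylv p i j * sylv p i j = 1"
  using sylv_sign[of p i j] by auto

lemma of_int_sylv_mult_self [simp]: "(of_int (sylv p i j) :: 'a::ring_1) * of_int (sylv p i j) = 1"
  by (metis of_int_1 of_int_mult sylv_mult_self)

lemma block_index_le_iff:
  fixes a x :: nat
  assumes "a < 2^q"
  shows "a + 1 + 2^q * x \<le> 2^(p+q) \<longleftrightarrow> x < 2^p"
proof
  assume "a + 1 + 2^q * x \<le> 2^(p+q)"
  moreover have "(2::nat)^(p+q) = 2^q * 2^p" by (simp add: power_add)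
  ultimately have "2^q * x < 2^q * 2^p" by linarith
  then show "x < 2^p" by simp
next
  assume "x < 2^p"
  then have "2^q * (x + 1) \<le> (2::nat)^q * 2^p" by (intro mult_le_mono2) simp
  with assms show "a + 1 + 2^q * x \<le> 2^(p+q)" by (simp add: power_add algebra_simps)
qed

lemma block_index_diff:
  fixes a x :: nat
  assumes "2^p \<le> x"
  shows "a + 1 + 2^q * x - 2^(p+q) = a + 1 + 2^q * (x - 2^p)"
proof -
  have "(2::nat)^q * 2^p \<le> 2^q * x" using assms by simp
  then have "a + 1 + 2^q * x - 2^q * 2^p = a + 1 + (2^q * x - (2::nat)^q * 2^p)" by arith
  then show ?thesis by (simp add: power_add diff_mult_distrib2 mult.commute)
qed

lemma sylv_kronecker:
  assumes "a < 2^q" "b < 2^q" "x < 2^p" "y < 2^p"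
  shows "sylv (p+q) (a + 1 + 2^q * x) (b + 1 + 2^q * y) = sylv p (x+1) (y+1) * sylv q (a+1) (b+1)"
  using assms(3,4)
proof (induction p arbitrary: x y)
  case 0
  then show ?case by simp
next
  case (Suc p)
  have "x - 2^p < 2^p" "y - 2^p < 2^p" using Suc.prems by auto
  then show ?case
    unfolding add_Suc sylv.simps(2)[of "p+q"]
      block_index_le_iff[OF assms(1)] block_index_le_iff[OF assms(2)]
    using Suc.IH[of x y] Suc.IH[of "x - 2^p" y] Suc.IH[of x "y - 2^p"]
      Suc.IH[of "x - 2^p" "y - 2^p"] block_index_diff[of p x a q] block_index_diff[of p y b q]
      Suc.prems
    by (auto simp: Suc_diff_le)
qed

lemma sum_lessThan_double:
  fixes f :: "nat \<Rightarrow> 'a::comm_monoid_add"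
  shows "(\<Sum>j<2*M. f j) = (\<Sum>j<M. f j) + (\<Sum>j<M. f (j + M))"
proof -
  have "(\<Sum>j<2*M. f j) = (\<Sum>j<M. f j) + (\<Sum>j\<in>{M..<2*M}. f j)"
    using sum.atLeastLessThan_concat[of 0 M "2*M" f] by (simp add: atLeast0LessThan)
  also have "(\<Sum>j\<in>{M..<2*M}. f j) = (\<Sum>j<M. f (j + M))"
    using sum.shift_bounds_nat_ivl[of f 0 M M] by (simp add: lessThan_atLeast0 mult_2)
  finally show ?thesis .
qed

lemma sylv_orthogonal:
  assumes "a < 2^q" "b < 2^q"
  shows "(\<Sum>j<2^q. sylv q (a+1) (j+1) * sylv q (b+1) (j+1)) = (if a = b then 2^q else 0)"
  using assms
proof (induction q arbitrary: a b)
  case 0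
  then show ?case by simp
next
  case (Suc q)
  define a' where "a' = (if a < 2^q then a else a - 2^q)"
  define b' where "b' = (if b < 2^q then b else b - 2^q)"
  define \<epsilon> :: int where "\<epsilon> = (if a < 2^q \<longleftrightarrow> b < 2^q then 1 else -1)"
  let ?f = "\<lambda>j. sylv (Suc q) (a+1) (j+1) * sylv (Suc q) (b+1) (j+1)"
  let ?g = "\<lambda>j. sylv q (a'+1) (j+1) * sylv q (b'+1) (j+1)"
  have "a' < 2^q" "b' < 2^q" using Suc.prems by (auto simp: a'_def b'_def)
  note IH = Suc.IH[OF this]
  have left: "?f j = ?g j" and right: "?f (j + 2^q) = \<epsilon> * ?g j" if "j < 2^q" for j
    using that Suc.prems by (auto simp: a'_def b'_def \<epsilon>_def Suc_diff_le)
  have "(\<Sum>j<2^Suc q. ?f j) = (\<Sum>j<2^q. ?f j) + (\<Sum>j<2^q. ?f (j + 2^q))"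
    using sum_lessThan_double[where M="2^q" and f="?f"] by simp
  also have "\<dots> = (\<Sum>j<2^q. ?g j) + (\<Sum>j<2^q. \<epsilon> * ?g j)"
    using left right by (simp del: sylv.simps)
  also have "\<dots> = (1 + \<epsilon>) * (\<Sum>j<2^q. ?g j)"
    by (simp add: distrib_right sum_distrib_left sum.distrib)
  also have "\<dots> = (if a = b then 2^Suc q else 0)"
    using IH Suc.prems by (auto simp: a'_def b'_def \<epsilon>_def)
  finally show ?case .
qed

lemma det_nonzero_if_orthogonal_rows:
  fixes S :: "'a::idom mat"
  assumes S: "S \<in> carrier_mat n n" and orth: "S * transpose_mat S = c \<cdot>\<^sub>m 1\<^sub>m n" and "c \<noteq> 0"
  shows "det S \<noteq> 0"
proof -
  have "det S * det S = det (S * transpose_mat S)"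
    using det_mult[OF S, of "transpose_mat S"] det_transpose[OF S] S by simp
  also have "\<dots> = c ^ n" using orth by simp
  finally show ?thesis using \<open>c \<noteq> 0\<close> by auto
qed

lemma det_eq_0_if_proportional_rows:
  fixes S :: "'a::idom mat"
  assumes S: "S \<in> carrier_mat n n" and "i < n" "i' < n" "i \<noteq> i'" "e \<noteq> 0"
    and rows: "row S i' = e \<cdot>\<^sub>v row S i"
  shows "det S = 0"
proof -
  have "row (multrow i e S) i = row (multrow i e S) i'"
    using assms by (intro eq_vecI) (auto simp: vec_eq_iff)
  then have "det (multrow i e S) = 0"
    using assms by (intro det_identical_rows[of _ n i i']) auto
  then show ?thesis using det_multrow[OF \<open>i < n\<close> S] \<open>e \<noteq> 0\<close> by simp
qed

lemma det_signed_row_selection_eq_0_iff: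
  fixes S :: "'a::field mat" and H :: "nat \<Rightarrow> nat \<Rightarrow> 'a"
  assumes S: "S \<in> carrier_mat n n"
    and entries: "\<And>i j. i < n \<Longrightarrow> j < n \<Longrightarrow> S $$ (i, j) = \<sigma> i * H (\<rho> i) j"
    and sign: "\<And>i. i < n \<Longrightarrow> \<sigma> i * \<sigma> i = 1"
    and range: "\<And>i. i < n \<Longrightarrow> \<rho> i < n"
    and orth: "\<And>a b. a < n \<Longrightarrow> b < n \<Longrightarrow> (\<Sum>j<n. H a j * H b j) = (if a = b then c else 0)"
    and "c \<noteq> 0"
  shows "det S = 0 \<longleftrightarrow> \<not> inj_on \<rho> {..<n}"
proof
  assume "det S = 0"
  show "\<not> inj_on \<rho> {..<n}"
  proof
    assume inj: "inj_on \<rho> {..<n}"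
    have "S * transpose_mat S = c \<cdot>\<^sub>m 1\<^sub>m n"
    proof (rule eq_matI)
      fix i i' assume "i < dim_row (c \<cdot>\<^sub>m 1\<^sub>m n)" "i' < dim_col (c \<cdot>\<^sub>m 1\<^sub>m n)"
      then have i: "i < n" and i': "i' < n" by auto
      have "(S * transpose_mat S) $$ (i, i') = (\<Sum>j<n. S $$ (i, j) * S $$ (i', j))"
        using S i i' by (simp add: scalar_prod_def lessThan_atLeast0)
      also have "\<dots> = \<sigma> i * \<sigma> i' * (\<Sum>j<n. H (\<rho> i) j * H (\<rho> i') j)"
        using entries i i' by (simp add: sum_distrib_left ac_simps)
      also have "\<dots> = (c \<cdot>\<^sub>m 1\<^sub>m n) $$ (i, i')"
        using orth range inj_onD[OF inj] sign i i' by auto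
      finally show "(S * transpose_mat S) $$ (i, i') = (c \<cdot>\<^sub>m 1\<^sub>m n) $$ (i, i')" .
    qed (use S in auto)
    with det_nonzero_if_orthogonal_rows[OF S] \<open>c \<noteq> 0\<close> \<open>det S = 0\<close> show False by blast
  qed
next
  assume "\<not> inj_on \<rho> {..<n}"
  then obtain i i' where i: "i < n" "i' < n" "i \<noteq> i'" and same: "\<rho> i = \<rho> i'"
    unfolding inj_on_def by auto
  have "S $$ (i', j) = \<sigma> i * \<sigma> i' * S $$ (i, j)" if "j < n" for j
  proof -
    have "S $$ (i', j) = \<sigma> i' * (\<sigma> i * \<sigma> i) * H (\<rho> i) j"
      using entries[OF i(2) that] same sign[OF i(1)] by simp
    then show ?thesis using entries[OF i(1) that] by (simp add: ac_simps)
  qed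
  then have "row S i' = (\<sigma> i * \<sigma> i') \<cdot>\<^sub>v row S i"
    using S i by (intro eq_vecI) auto
  moreover have "\<sigma> i * \<sigma> i' \<noteq> 0"
    using sign i by (metis mult_eq_0_iff zero_neq_one)
  ultimately show "det S = 0"
    using det_eq_0_if_proportional_rows[OF S i] by blast
qed

lemma suppressed_iff_det_eq_0: "suppressed p s t \<longleftrightarrow> det (scattering p s t) = 0"
proof -
  have "(0::nat) < (\<Prod>k\<in>{1..2^p}. fact (mu s k)) * (\<Prod>k\<in>{1..2^p}. fact (mu t k))"
    by (simp add: prod_pos)
  then show ?thesis
    unfolding suppressed_def fermion_amplitude_def by simp
qed

lemma det_scattering_input_block_eq_0_iff:
  assumes c: "c < 2^k" and len: "length t = 2^q" and modes: "set t \<subseteq> {1..2^(k+q)}"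
  shows "det (scattering (k+q) (map (\<lambda>i. i + 2^q * c) [1..<2^q+1]) t) = 0
     \<longleftrightarrow> \<not> inj_on (\<lambda>i. (t!i - 1) mod 2^q) {..<2^q}"
proof (rule det_signed_row_selection_eq_0_iff
    [where \<sigma> = "\<lambda>i. of_int (sylv k ((t!i - 1) div 2^q + 1) (c+1))"
      and H = "\<lambda>a j. of_int (sylv q (a+1) (j+1)) / sqrt (2^(k+q))"
      and c = "2^q / 2^(k+q)"])
  let ?s = "map (\<lambda>i. i + 2^q * c) [1..<2^q+1]"
  show "scattering (k+q) ?s t \<in> carrier_mat (2^q) (2^q)"
    using len by (simp add: scattering_def del: upt_Suc)
  fix i j :: nat assume i: "i < 2^q" and j: "j < 2^q"
  have "t!i \<in> {1..2^(k+q)}" using modes len i nth_mem[of i t] by (auto simp del: nth_mem)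
  then have ti: "t!i = (t!i - 1) mod 2^q + 1 + 2^q * ((t!i - 1) div 2^q)"
    and hi: "(t!i - 1) div 2^q < 2^k"
    by (auto simp: less_mult_imp_div_less power_add mult.commute)
  have "sylv (k+q) ((t!i - 1) mod 2^q + 1 + 2^q * ((t!i - 1) div 2^q)) (j + 1 + 2^q * c)
      = sylv k ((t!i - 1) div 2^q + 1) (c+1) * sylv q ((t!i - 1) mod 2^q + 1) (j+1)"
    by (rule sylv_kronecker) (use hi c j in simp_all)
  then have "sylv (k+q) (t!i) (j + 1 + 2^q * c)
      = sylv k ((t!i - 1) div 2^q + 1) (c+1) * sylv q ((t!i - 1) mod 2^q + 1) (j+1)"
    by (simp only: ti[symmetric])
  moreover have "?s ! j = j + 1 + 2^q * c" using j by (simp del: upt_Suc)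
  ultimately show "scattering (k+q) ?s t $$ (i, j) =
      of_int (sylv k ((t!i - 1) div 2^q + 1) (c+1))
        * (of_int (sylv q ((t!i - 1) mod 2^q + 1) (j+1)) / sqrt (2^(k+q)))"
    using i j len by (simp add: scattering_def sylvU_def del: upt_Suc)
next
  fix a b :: nat assume "a < 2^q" "b < 2^q"
  have "(\<Sum>j<2^q. real_of_int (sylv q (a+1) (j+1)) / sqrt (2^(k+q))
          * (real_of_int (sylv q (b+1) (j+1)) / sqrt (2^(k+q))))
      = real_of_int (\<Sum>j<2^q. sylv q (a+1) (j+1) * sylv q (b+1) (j+1)) / 2^(k+q)"
    by (simp add: sum_divide_distrib)
  also have "\<dots> = (if a = b then 2^q / 2^(k+q) else 0)"
    using sylv_orthogonal[OF \<open>a < 2^q\<close> \<open>b < 2^q\<close>] by simp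
  finally show "(\<Sum>j<2^q. real_of_int (sylv q (a+1) (j+1)) / sqrt (2^(k+q))
          * (real_of_int (sylv q (b+1) (j+1)) / sqrt (2^(k+q))))
      = (if a = b then 2^q / 2^(k+q) else 0)" .
qed simp_all

lemma card_transversals:
  assumes "finite B"
  shows "card {X. X \<subseteq> A \<and> bij_betw f X B} = (\<Prod>b\<in>B. card {x \<in> A. f x = b})"
proof -
  let ?P = "\<Pi>\<^sub>E b\<in>B. {x \<in> A. f x = b}"
  let ?T = "{X. X \<subseteq> A \<and> bij_betw f X B}"
  have "bij_betw (\<lambda>g. g ` B) ?P ?T"
  proof (rule bij_betw_imageI)
    show "inj_on (\<lambda>g. g ` B) ?P"
    proof (rule inj_onI)
      fix g g' assume g: "g \<in> ?P" and g': "g' \<in> ?P" and eq: "g ` B = g' ` B"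
      show "g = g'"
      proof (rule PiE_ext[OF g g'])
        fix b assume b: "b \<in> B"
        then obtain b' where "b' \<in> B" "g b = g' b'" using eq by blast
        moreover have "f (g b) = b" "f (g' b') = b'" using g g' b \<open>b' \<in> B\<close> by auto
        ultimately show "g b = g' b" by simp
      qed
    qed
    show "(\<lambda>g. g ` B) ` ?P = ?T"
    proof (intro equalityI subsetI)
      fix X assume "X \<in> (\<lambda>g. g ` B) ` ?P"
      then obtain g where g: "g \<in> ?P" and X: "X = g ` B" by blast
      have "bij_betw f (g ` B) B"
        by (rule bij_betw_byWitness[where f' = g]) (use g in \<open>auto simp: PiE_iff\<close>)
      then show "X \<in> ?T" using g X by auto
    next
      fix X assume "X \<in> ?T"
      then have X: "X \<subseteq> A" and bij: "bij_betw f X B" by auto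
      let ?g = "restrict (the_inv_into X f) B"
      have "bij_betw (the_inv_into X f) B X" by (rule bij_betw_the_inv_into[OF bij])
      then have image: "?g ` B = X" and member: "?g \<in> ?P"
        using X f_the_inv_into_f_bij_betw[OF bij] by (auto simp: bij_betw_def)
      show "X \<in> (\<lambda>g. g ` B) ` ?P" by (rule image_eqI[where f = "\<lambda>g. g ` B", OF image[symmetric] member])
    qed
  qed
  then have "card ?T = card ?P" by (rule bij_betw_same_card[symmetric])
  also have "\<dots> = (\<Prod>b\<in>B. card {x \<in> A. f x = b})" by (rule card_PiE[OF assms])
  finally show ?thesis .
qed

lemma card_residue_class:
  fixes n N r :: nat
  assumes "r < n"
  shows "card {x \<in> {1..n * N}. (x - 1) mod n = r} = N"
proof -
  have "bij_betw (\<lambda>j. r + 1 + n * j) {..<N} {x \<in> {1..n * N}. (x - 1) mod n = r}"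
  proof (rule bij_betw_imageI)
    show "inj_on (\<lambda>j. r + 1 + n * j) {..<N}" by (rule inj_onI) (use assms in simp)
    show "(\<lambda>j. r + 1 + n * j) ` {..<N} = {x \<in> {1..n * N}. (x - 1) mod n = r}"
    proof (intro equalityI subsetI)
      fix x assume "x \<in> (\<lambda>j. r + 1 + n * j) ` {..<N}"
      then obtain j where "j < N" and x: "x = r + 1 + n * j" by blast
      have "n * (j + 1) \<le> n * N" using \<open>j < N\<close> by (intro mult_le_mono2) simp
      then have "x \<le> n * N" using x assms by simp
      moreover have "(x - 1) mod n = r" using x assms by simp
      ultimately show "x \<in> {x \<in> {1..n * N}. (x - 1) mod n = r}" using x by simp
    next
      fix x assume "x \<in> {x \<in> {1..n * N}. (x - 1) mod n = r}"
      then have x: "1 \<le> x" "x \<le> n * N" and res: "(x - 1) mod n = r" by auto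
      have "x - 1 = (x - 1) mod n + n * ((x - 1) div n)" by simp
      then have "x - 1 = r + n * ((x - 1) div n)" by (simp only: res)
      then have decomp: "x = r + 1 + n * ((x - 1) div n)" using x(1) by linarith
      have "x - 1 < N * n" using x by (simp add: mult.commute)
      then have "(x - 1) div n \<in> {..<N}" by (simp add: less_mult_imp_div_less)
      then show "x \<in> (\<lambda>j. r + 1 + n * j) ` {..<N}" by (rule image_eqI[where f = "\<lambda>j. r + 1 + n * j", OF decomp])
    qed
  qed
  then have "card {..<N} = card {x \<in> {1..n * N}. (x - 1) mod n = r}"
    by (rule bij_betw_same_card)
  then show ?thesis by simp
qed

lemma inj_on_nth_iff_distinct_map:
  "inj_on (\<lambda>i. f (xs ! i)) {..<length xs} \<longleftrightarrow> distinct (map f xs)"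
  by (auto simp: inj_on_def distinct_conv_nth)

lemma card_output_states_distinct_map:
  assumes "finite B" and into: "f ` {1..m} \<subseteq> B" and "card B = n"
  shows "card {t \<in> output_states m n. distinct (map f t)} = card {X. X \<subseteq> {1..m} \<and> bij_betw f X B}"
proof (rule bij_betw_same_card[of set])
  show "bij_betw set {t \<in> output_states m n. distinct (map f t)} {X. X \<subseteq> {1..m} \<and> bij_betw f X B}"
  proof (rule bij_betw_imageI)
    show "inj_on set {t \<in> output_states m n. distinct (map f t)}"
      by (rule inj_onI) (auto simp: output_states_def distinct_map intro: sorted_distinct_set_unique)
    show "set ` {t \<in> output_states m n. distinct (map f t)} = {X. X \<subseteq> {1..m} \<and> bij_betw f X B}"
    proof (intro equalityI subsetI)
      fix X assume "X \<in> set ` {t \<in> output_states m n. distinct (map f t)}"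
      then obtain t where t: "t \<in> output_states m n" "distinct (map f t)" and X: "X = set t"
        by blast
      then have inj: "inj_on f X" and sub: "X \<subseteq> {1..m}" and "card X = n"
        by (auto simp: output_states_def distinct_map distinct_card)
      then have "card (f ` X) = card B" using card_image[OF inj] \<open>card B = n\<close> by simp
      moreover have "f ` X \<subseteq> B" using sub into by blast
      ultimately have "f ` X = B" using card_subset_eq[OF \<open>finite B\<close>] by blast
      then show "X \<in> {X. X \<subseteq> {1..m} \<and> bij_betw f X B}" using inj sub by (simp add: bij_betw_def)
    next
      fix X assume "X \<in> {X. X \<subseteq> {1..m} \<and> bij_betw f X B}"
      then have sub: "X \<subseteq> {1..m}" and bij: "bij_betw f X B" by auto
      have "finite X" using sub finite_subset by blast
      moreover have "card X = n" using bij_betw_same_card[OF bij] \<open>card B = n\<close> by simp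
      ultimately have "sorted_list_of_set X \<in> {t \<in> output_states m n. distinct (map f t)}"
        using sub bij by (simp add: output_states_def distinct_map bij_betw_def)
      then show "X \<in> set ` {t \<in> output_states m n. distinct (map f t)}"
        using \<open>finite X\<close> by (metis image_eqI set_sorted_list_of_set)
    qed
  qed
qed

lemma card_output_states_distinct_residues:
  fixes n N :: nat
  assumes "0 < n"
  shows "card {t \<in> output_states (n * N) n. inj_on (\<lambda>i. (t!i - 1) mod n) {..<n}} = N ^ n"
proof -
  let ?res = "\<lambda>x. (x - 1) mod n"
  have "{t \<in> output_states (n * N) n. inj_on (\<lambda>i. ?res (t!i)) {..<n}}
      = {t \<in> output_states (n * N) n. distinct (map ?res t)}"
    by (auto simp: output_states_def inj_on_nth_iff_distinct_map[symmetric])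
  also have "card \<dots> = card {X. X \<subseteq> {1..n * N} \<and> bij_betw ?res X {..<n}}"
    by (rule card_output_states_distinct_map) (use assms in auto)
  also have "\<dots> = (\<Prod>r<n. card {x \<in> {1..n * N}. ?res x = r})"
    by (rule card_transversals) simp
  also have "\<dots> = N ^ n" using card_residue_class[of _ n N] by simp
  finally show ?thesis .
qed

lemma card_output_states: "card (output_states m n) = (m + n - 1) choose n"
proof -
  have inj: "inj_on mset (output_states m n)"
  proof (rule inj_onI)
    fix xs ys assume "xs \<in> output_states m n" "ys \<in> output_states m n" "mset xs = mset ys"
    then have "sorted xs" "sorted ys" "mset ys = mset xs" by (simp_all add: output_states_def)
    then show "xs = ys" using properties_for_sort[of ys xs] sorted_sort_id[of xs] by simp
  qed
  have "mset ` output_states m n = multisets_of_size {1..m} n"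
  proof (intro equalityI subsetI)
    fix M assume M: "M \<in> multisets_of_size {1..m} n"
    obtain xs where xs: "M = mset xs" using ex_mset[of M] by metis
    have "sort xs \<in> output_states m n"
      using M unfolding output_states_def multisets_of_size_def xs by simp
    moreover have "M = mset (sort xs)" by (simp add: xs)
    ultimately show "M \<in> mset ` output_states m n" by (rule rev_image_eqI)
  qed (auto simp: output_states_def multisets_of_size_def)
  then have "card (output_states m n) = card (multisets_of_size {1..m} n)"
    using card_image[OF inj] by simp
  also have "\<dots> = (m + n - 1) choose n" by (simp add: card_multisets_of_size)
  finally show ?thesis .
qed

theorem mainTheorem13:
  fixes k q c :: nat
  assumes "c \<le> 2 ^ k - 1"
  shows "card {t \<in> output_states (2 ^ (k + q)) (2 ^ q).
            \<not> suppressed (k + q) (map (\<lambda>i. i + 2 ^ q * c) [1..<2 ^ q + 1]) t}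
           = (2 ^ (k + q) div 2 ^ q) ^ (2 ^ q)
       \<and> (2 ^ (k + q) div 2 ^ q) ^ (2 ^ q) = (2::nat) ^ (k * 2 ^ q)
       \<and> card (output_states (2 ^ (k + q)) (2 ^ q)) = (2 ^ (k + q) + 2 ^ q - 1) choose (2 ^ q)"
proof -
  let ?s = "map (\<lambda>i. i + 2 ^ q * c) [1..<2 ^ q + 1]"
  have "c < 2^k" using assms by (simp add: le_diff_conv2 Suc_le_eq)
  have m: "(2::nat) ^ (k + q) = 2^q * 2^k" by (simp add: power_add)
  have "{t \<in> output_states (2 ^ (k + q)) (2 ^ q). \<not> suppressed (k + q) ?s t}
      = {t \<in> output_states (2^q * 2^k) (2^q). inj_on (\<lambda>i. (t!i - 1) mod 2^q) {..<2^q}}"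
    using det_scattering_input_block_eq_0_iff[OF \<open>c < 2^k\<close>]
    by (auto simp: suppressed_iff_det_eq_0 output_states_def m)
  then have "card {t \<in> output_states (2 ^ (k + q)) (2 ^ q). \<not> suppressed (k + q) ?s t}
      = (2^k) ^ (2^q)"
    using card_output_states_distinct_residues[of "2^q" "2^k"] by simp
  then show ?thesis by (simp add: m power_mult card_output_states)
qed

end
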